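(* For every $\theta\in\Theta$ and every mass vector $W=[w_1,\dots,w_n]$ (i.e. $w_i\ge 0$, $\sum_{i=1}^n w_i=1$), with induced distribution $\tilde{\mathbb P}_n=\sum_{i=1}^n w_i\delta_{\xi_i}$, every minimizer $\tilde\lambda_*(\theta)$ of $\lambda\mapsto \lambda\sigma^p+\tilde H(\theta,\lambda)$ over $\lambda\ge 0$ satisfies $$\tilde\lambda_*(\theta)\le \tau(\theta):=\mathtt C(\theta)\left(2^{p-1}+\frac{1+2^{p-1}\rho^p}{\sigma^p}\right),$$ where $\rho=\max_{i\in[n]}\mathtt d(\xi_i,\xi_0)$.
   Context: Setting: $\Xi=\mathbb X\times\mathbb Y$ with $\mathbb X\subseteq\mathbb R^m$, $\mathbb Y\subseteq\mathbb R$, equipped with the metric $\mathtt d((x,y),(x',y'))=\|x-x'\|+\frac{\gamma}{2}|y-y'|$ for a norm $\|\cdot\|$ on $\mathbb R^m$ and $\gamma>0$; $(\Xi,\mathtt d)$ is assumed complete. Fix $p\ge1$, $\sigma>0$, data points $\xi_1,\dots,\xi_n\in\Xi$, $[n]=\{1,\dots,n\}$. A loss $\ell:\mathbb R^d\times\Xi\to[0,\infty)$ and a feasible set $\Theta\subseteq\mathbb R^d$ are given. Assumption: $\ell(\theta,\cdot)$ is continuous for every $\theta\in\Theta$, and there exist a positive continuous function $\mathtt C(\theta)$ and a point $\xi_0\in\Xi$ with $\ell(\theta,\xi)\le \mathtt C(\theta)(1+\mathtt d^p(\xi,\xi_0))$ for all $\theta\in\Theta,\xi\in\Xi$. Define the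 Moreau–Yosida regularization $h(\theta,\lambda,\xi)=\sup_{\zeta\in\Xi}\{\ell(\theta,\zeta)-\lambda\mathtt d^p(\zeta,\xi)\}$, $h_i(\theta,\lambda)=h(\theta,\lambda,\xi_i)$, and for a mass vector $W$, $\tilde H(\theta,\lambda)=\sum_{i=1}^n w_ih_i(\theta,\lambda)$. *)

theory Defs
  imports "HOL-Analysis.Analysis"
begin

definition is_norm :: "(real ^ 'm \<Rightarrow> real) \<Rightarrow> bool" where
  "is_norm N \<longleftrightarrow> (\<forall>x. N x = 0 \<longleftrightarrow> x = 0) \<and> (\<forall>a x. N (a *\<^sub>R x) = \<bar>a\<bar> * N x)
     \<and> (\<forall>x y. N (x + y) \<le> N x + N y)"

definition dXi :: "(real ^ 'm \<Rightarrow> real) \<Rightarrow> real \<Rightarrow> ((real ^ 'm) \<times> real) \<Rightarrow> ((real ^ 'm) \<times> real) \<Rightarrow> real" where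
  "dXi N \<gamma> a b = N (fst a - fst b) + \<gamma> / 2 * \<bar>snd a - snd b\<bar>"

definition complete_wrt :: "('a \<Rightarrow> 'a \<Rightarrow> real) \<Rightarrow> 'a set \<Rightarrow> bool" where
  "complete_wrt d S \<longleftrightarrow> (\<forall>s. (\<forall>k. s k \<in> S) \<and> (\<forall>e>0. \<exists>M. \<forall>j\<ge>M. \<forall>k\<ge>M. d (s j) (s k) < e)
       \<longrightarrow> (\<exists>l\<in>S. (\<lambda>k. d (s k) l) \<longlonglongrightarrow> 0))"

definition continuous_wrt :: "('a \<Rightarrow> 'a \<Rightarrow> real) \<Rightarrow> 'a set \<Rightarrow> ('a \<Rightarrow> real) \<Rightarrow> bool" where
  "continuous_wrt d S f \<longleftrightarrow> (\<forall>x\<in>S. \<forall>e>0. \<exists>\<delta>>0. \<forall>z\<in>S. d z x < \<delta> \<longrightarrow> \<bar>f z - f x\<bar> < e)"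

definition MY_reg :: "('t \<Rightarrow> 'a \<Rightarrow> real) \<Rightarrow> ('a \<Rightarrow> 'a \<Rightarrow> real) \<Rightarrow> real \<Rightarrow> 'a set
      \<Rightarrow> 't \<Rightarrow> real \<Rightarrow> 'a \<Rightarrow> ereal" where
  "MY_reg loss d p Xi \<theta> lam \<xi> = (SUP \<zeta>\<in>Xi. ereal (loss \<theta> \<zeta> - lam * (d \<zeta> \<xi>) powr p))"

definition H_tilde :: "('t \<Rightarrow> 'a \<Rightarrow> real) \<Rightarrow> ('a \<Rightarrow> 'a \<Rightarrow> real) \<Rightarrow> real \<Rightarrow> 'a set
      \<Rightarrow> nat \<Rightarrow> (nat \<Rightarrow> 'a) \<Rightarrow> (nat \<Rightarrow> real) \<Rightarrow> 't \<Rightarrow> real \<Rightarrow> ereal" where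
  "H_tilde loss d p Xi n \<xi> w \<theta> lam = (\<Sum>i\<in>{1..n}. ereal (w i) * MY_reg loss d p Xi \<theta> lam (\<xi> i))"

end

theory Submission imports Defs begin

text \<open>Taking \<zeta> = \<xi>_i in the supremum shows that every h_i, hence \<tilde>H, is nonnegative,
  so \<tilde>\<lambda>_* \<sigma>^p \<le> \<lambda>_0 \<sigma>^p + \<tilde>H(\<theta>, \<lambda>_0) for every \<lambda>_0 \<ge> 0. For \<lambda>_0 = C(\<theta>) 2^(p-1) the growth
  bound, the triangle inequality and convexity of t \<mapsto> t^p give
  \<ell>(\<theta>,\<zeta>) \<le> C(\<theta>)(1 + 2^(p-1) d^p(\<zeta>,\<xi>_i) + 2^(p-1) d^p(\<xi>_i,\<xi>_0)), so the penalty absorbs the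
  \<zeta>-dependent part and h_i(\<theta>,\<lambda>_0) \<le> C(\<theta>)(1 + 2^(p-1) \<rho>^p).\<close>

lemma powr_add_le_two_powr:
  fixes a b p :: real
  assumes "a \<ge> 0" "b \<ge> 0" "p \<ge> 1"
  shows "(a + b) powr p \<le> 2 powr (p - 1) * (a powr p + b powr p)"
proof (cases "a > 0 \<and> b > 0")
  case True
  have "((1 - 1/2) *\<^sub>R a + (1/2) *\<^sub>R b) powr p \<le> (1 - 1/2) * a powr p + (1/2) * b powr p"
    using True assms(3) by (intro convex_onD[OF powr_convex]) auto
  then have midpoint: "((a + b) / 2) powr p \<le> (a powr p + b powr p) / 2"
    by (simp add: field_simps)
  have "(a + b) powr p = (2 * ((a + b) / 2)) powr p"
    by (rule arg_cong[where f = "\<lambda>t. t powr p"]) simp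
  also have "\<dots> = 2 powr p * ((a + b) / 2) powr p"
    using assms by (subst powr_mult) auto
  also have "\<dots> \<le> 2 powr p * ((a powr p + b powr p) / 2)"
    using midpoint by (rule mult_left_mono) simp
  also have "\<dots> = 2 powr (p - 1) * (a powr p + b powr p)"
    by (simp add: powr_diff)
  finally show ?thesis .
next
  case False
  then have "a = 0 \<or> b = 0" using assms by auto
  then have "(a + b) powr p = 1 * (a powr p + b powr p)" by auto
  also have "\<dots> \<le> 2 powr (p - 1) * (a powr p + b powr p)"
    using assms(3) by (intro mult_right_mono ge_one_powr_ge_zero) auto
  finally show ?thesis .
qed

lemma is_norm_nonneg:
  assumes "is_norm N"
  shows "N x \<ge> 0"
proof -
  have "N (x + (-1) *\<^sub>R x) \<le> N x + N ((-1) *\<^sub>R x)"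
    using assms unfolding is_norm_def by blast
  moreover have "N ((-1) *\<^sub>R x) = \<bar>-1\<bar> * N x" "N 0 = 0"
    using assms unfolding is_norm_def by blast+
  ultimately show ?thesis by simp
qed

lemma dXi_nonneg:
  assumes "is_norm N" "\<gamma> \<ge> 0"
  shows "dXi N \<gamma> a b \<ge> 0"
  using assms is_norm_nonneg[OF assms(1)] unfolding dXi_def by (simp add: add_nonneg_nonneg)

lemma dXi_triangle:
  assumes "is_norm N" "\<gamma> \<ge> 0"
  shows "dXi N \<gamma> a c \<le> dXi N \<gamma> a b + dXi N \<gamma> b c"
proof -
  have "N (fst a - fst c) \<le> N (fst a - fst b) + N (fst b - fst c)"
    using assms(1) unfolding is_norm_def by (metis diff_add_cancel add_diff_eq)
  moreover have "\<gamma>/2 * \<bar>snd a - snd c\<bar> \<le> \<gamma>/2 * \<bar>snd a - snd b\<bar> + \<gamma>/2 * \<bar>snd b - snd c\<bar>"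
    using assms(2) by (simp flip: distrib_left add: mult_left_mono)
  ultimately show ?thesis unfolding dXi_def by linarith
qed

lemma dXi_self:
  assumes "is_norm N"
  shows "dXi N \<gamma> a a = 0"
  using assms unfolding dXi_def is_norm_def by simp

lemma MY_reg_ge_loss:
  assumes "\<xi> \<in> Xi" "d \<xi> \<xi> = 0" "p \<noteq> 0"
  shows "ereal (loss \<theta> \<xi>) \<le> MY_reg loss d p Xi \<theta> lam \<xi>"
proof -
  have "ereal (loss \<theta> \<xi> - lam * d \<xi> \<xi> powr p) \<le> MY_reg loss d p Xi \<theta> lam \<xi>"
    unfolding MY_reg_def using assms(1) by (rule SUP_upper)
  then show ?thesis using assms(2,3) by simp
qed

lemma MY_reg_le_of_growth:
  fixes d :: "'a \<Rightarrow> 'a \<Rightarrow> real"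
  assumes p: "p \<ge> 1" and c: "c \<ge> 0"
    and d_nonneg: "\<And>x y. d x y \<ge> 0"
    and d_triangle: "\<And>x y z. d x z \<le> d x y + d y z"
    and growth: "\<And>z. z \<in> Xi \<Longrightarrow> loss \<theta> z \<le> c * (1 + d z \<xi>0 powr p)"
    and r: "d \<xi> \<xi>0 \<le> r"
  shows "MY_reg loss d p Xi \<theta> (c * 2 powr (p - 1)) \<xi> \<le> ereal (c * (1 + 2 powr (p - 1) * r powr p))"
  unfolding MY_reg_def
proof (rule SUP_least)
  fix z assume z: "z \<in> Xi"
  have r_nonneg: "r \<ge> 0"
    using d_nonneg r by (rule order_trans)
  have "d z \<xi>0 powr p \<le> (d z \<xi> + r) powr p"
    using p d_nonneg d_triangle[of z \<xi>0 \<xi>] r by (intro powr_mono2) auto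
  also have "\<dots> \<le> 2 powr (p - 1) * (d z \<xi> powr p + r powr p)"
    using p d_nonneg r_nonneg by (intro powr_add_le_two_powr) auto
  finally have "c * (1 + d z \<xi>0 powr p) \<le> c * (1 + 2 powr (p - 1) * (d z \<xi> powr p + r powr p))"
    using c by (intro mult_left_mono) auto
  with growth[OF z]
  have "loss \<theta> z - c * 2 powr (p - 1) * d z \<xi> powr p \<le> c * (1 + 2 powr (p - 1) * r powr p)"
    by (simp add: algebra_simps)
  then show "ereal (loss \<theta> z - c * 2 powr (p - 1) * d z \<xi> powr p)
               \<le> ereal (c * (1 + 2 powr (p - 1) * r powr p))"
    by simp
qed

lemma H_tilde_nonneg:
  assumes "\<And>i. i \<in> {1..n} \<Longrightarrow> w i \<ge> 0"
    and "\<And>i. i \<in> {1..n} \<Longrightarrow> MY_reg loss d p Xi \<theta> lam (\<xi> i) \<ge> 0"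
  shows "H_tilde loss d p Xi n \<xi> w \<theta> lam \<ge> 0"
  unfolding H_tilde_def using assms by (intro sum_nonneg ereal_0_le_mult) auto

lemma H_tilde_le:
  assumes "\<And>i. i \<in> {1..n} \<Longrightarrow> w i \<ge> 0" and "(\<Sum>i\<in>{1..n}. w i) = 1"
    and "\<And>i. i \<in> {1..n} \<Longrightarrow> MY_reg loss d p Xi \<theta> lam (\<xi> i) \<le> ereal B"
  shows "H_tilde loss d p Xi n \<xi> w \<theta> lam \<le> ereal B"
proof -
  have "H_tilde loss d p Xi n \<xi> w \<theta> lam \<le> (\<Sum>i\<in>{1..n}. ereal (w i) * ereal B)"
    unfolding H_tilde_def using assms(1,3) by (intro sum_mono ereal_mult_left_mono) auto
  also have "\<dots> = ereal B"
    using assms(2) by (simp flip: sum_distrib_right)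
  finally show ?thesis .
qed

theorem lemma1:
  fixes N :: "real ^ 'm \<Rightarrow> real" and \<gamma> p \<sigma> :: real
    and X :: "(real ^ 'm) set" and Y :: "real set"
    and n :: nat and \<xi> :: "nat \<Rightarrow> (real ^ 'm) \<times> real" and \<xi>0 :: "(real ^ 'm) \<times> real"
    and loss :: "real ^ 'd \<Rightarrow> (real ^ 'm) \<times> real \<Rightarrow> real" and \<Theta> :: "(real ^ 'd) set"
    and C :: "real ^ 'd \<Rightarrow> real"
    and w :: "nat \<Rightarrow> real" and \<theta> :: "real ^ 'd" and lam_s :: real
  assumes norm: "is_norm N"
    and gamma: "\<gamma> > 0"
    and complete: "complete_wrt (dXi N \<gamma>) (X \<times> Y)"
    and p: "p \<ge> 1" and sigma: "\<sigma> > 0"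
    and data: "\<forall>i\<in>{1..n}. \<xi> i \<in> X \<times> Y"
    and xi0: "\<xi>0 \<in> X \<times> Y"
    and loss_nonneg: "\<forall>t z. z \<in> X \<times> Y \<longrightarrow> loss t z \<ge> 0"
    and loss_cont: "\<forall>t\<in>\<Theta>. continuous_wrt (dXi N \<gamma>) (X \<times> Y) (loss t)"
    and C_cont: "continuous_on \<Theta> C" and C_pos: "\<forall>t\<in>\<Theta>. C t > 0"
    and growth: "\<forall>t\<in>\<Theta>. \<forall>z\<in>X \<times> Y. loss t z \<le> C t * (1 + (dXi N \<gamma> z \<xi>0) powr p)"
    and theta: "\<theta> \<in> \<Theta>"
    and w_nonneg: "\<forall>i\<in>{1..n}. w i \<ge> 0"
    and w_sum: "(\<Sum>i\<in>{1..n}. w i) = 1"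
    and minimizer: "lam_s \<ge> 0"
      "\<forall>lam\<ge>0. ereal (lam_s * \<sigma> powr p) + H_tilde loss (dXi N \<gamma>) p (X \<times> Y) n \<xi> w \<theta> lam_s
              \<le> ereal (lam * \<sigma> powr p) + H_tilde loss (dXi N \<gamma>) p (X \<times> Y) n \<xi> w \<theta> lam"
  shows "lam_s \<le> C \<theta> * (2 powr (p - 1)
            + (1 + 2 powr (p - 1) * (Max ((\<lambda>i. dXi N \<gamma> (\<xi> i) \<xi>0) ` {1..n})) powr p) / \<sigma> powr p)"
proof -
  let ?d = "dXi N \<gamma>" and ?H = "H_tilde loss (dXi N \<gamma>) p (X \<times> Y) n \<xi> w \<theta>"
  define \<rho> where "\<rho> = Max ((\<lambda>i. ?d (\<xi> i) \<xi>0) ` {1..n})"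
  define lam0 where "lam0 = C \<theta> * 2 powr (p - 1)"
  define B where "B = C \<theta> * (1 + 2 powr (p - 1) * \<rho> powr p)"
  have C\<theta>: "C \<theta> > 0" using C_pos theta by blast
  have "MY_reg loss ?d p (X \<times> Y) \<theta> lam0 (\<xi> i) \<le> ereal B" if "i \<in> {1..n}" for i
    unfolding lam0_def B_def \<rho>_def using that p C\<theta> growth theta gamma
    by (intro MY_reg_le_of_growth dXi_nonneg dXi_triangle norm Max_ge) auto
  then have H_lam0: "?H lam0 \<le> ereal B"
    using w_nonneg w_sum by (intro H_tilde_le) auto
  have "?H lam_s \<ge> 0"
    using w_nonneg data loss_nonneg[rule_format, of _ \<theta>] p
    by (intro H_tilde_nonneg order_trans[OF _ MY_reg_ge_loss]) (auto simp: dXi_self[OF norm])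
  then have "ereal (lam_s * \<sigma> powr p) \<le> ereal (lam_s * \<sigma> powr p) + ?H lam_s"
    by (simp add: add_increasing2)
  also have "\<dots> \<le> ereal (lam0 * \<sigma> powr p) + ?H lam0"
    using minimizer(2) C\<theta> by (simp add: lam0_def)
  also have "\<dots> \<le> ereal (lam0 * \<sigma> powr p) + ereal B"
    using H_lam0 by (rule add_left_mono)
  finally have "lam_s * \<sigma> powr p \<le> lam0 * \<sigma> powr p + B" by simp
  then have "lam_s \<le> lam0 + B / \<sigma> powr p" using sigma by (simp add: field_simps)
  then show ?thesis unfolding lam0_def B_def \<rho>_def by (simp add: algebra_simps)
qed

end
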